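(* Every idempotent in $\overline{\square}_\vee$ splits in $\overline{\square}_\vee$: for every $A \in \overline{\square}_\vee$ and every morphism $f \colon A \to A$ with $ff = f$, there exist $B \in \overline{\square}_\vee$ and morphisms $s \colon B \to A$, $r \colon A \to B$ in $\overline{\square}_\vee$ with $rs = \mathrm{id}_B$ and $sr = f$.
   Context: $\mathbf{SLat}$ is the category of (join-)semilattices—sets with an associative, commutative, idempotent binary operation $\vee$—and homomorphisms preserving $\vee$ (not necessarily preserving bounds or meets). Each semilattice is a poset via $x\le y\iff x\vee y=y$. $\overline{\square}_\vee$ is the full subcategory of $\mathbf{SLat}$ on the finite inhabited semilattices whose induced poset is a distributive lattice. *)

theory Defs
  imports Main
begin

definition semilattice_on :: "'a set \<Rightarrow> ('a \<Rightarrow> 'a \<Rightarrow> 'a) \<Rightarrow> bool" where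
  "semilattice_on A j \<longleftrightarrow>
     (\<forall>x\<in>A. \<forall>y\<in>A. j x y \<in> A) \<and>
     (\<forall>x\<in>A. \<forall>y\<in>A. \<forall>z\<in>A. j (j x y) z = j x (j y z)) \<and>
     (\<forall>x\<in>A. \<forall>y\<in>A. j x y = j y x) \<and>
     (\<forall>x\<in>A. j x x = x)"

definition sl_le :: "('a \<Rightarrow> 'a \<Rightarrow> 'a) \<Rightarrow> 'a \<Rightarrow> 'a \<Rightarrow> bool" where
  "sl_le j x y \<longleftrightarrow> j x y = y"

definition sl_is_meet :: "'a set \<Rightarrow> ('a \<Rightarrow> 'a \<Rightarrow> 'a) \<Rightarrow> 'a \<Rightarrow> 'a \<Rightarrow> 'a \<Rightarrow> bool" where
  "sl_is_meet A j x y m \<longleftrightarrow> m \<in> A \<and> sl_le j m x \<and> sl_le j m y \<and>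
     (\<forall>z\<in>A. sl_le j z x \<and> sl_le j z y \<longrightarrow> sl_le j z m)"

text \<open>The induced poset is a lattice (joins exist already; all binary meets exist)
  and it is distributive: x \<and> (y \<or> z) = (x \<and> y) \<or> (x \<and> z).\<close>
definition distrib_lattice_on :: "'a set \<Rightarrow> ('a \<Rightarrow> 'a \<Rightarrow> 'a) \<Rightarrow> bool" where
  "distrib_lattice_on A j \<longleftrightarrow>
     (\<forall>x\<in>A. \<forall>y\<in>A. \<exists>m. sl_is_meet A j x y m) \<and>
     (\<forall>x\<in>A. \<forall>y\<in>A. \<forall>z\<in>A. \<forall>m1 m2 m3.
        sl_is_meet A j x (j y z) m1 \<and> sl_is_meet A j x y m2 \<and> sl_is_meet A j x z m3
        \<longrightarrow> m1 = j m2 m3)"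

text \<open>Objects of the category: finite inhabited semilattices whose induced
  poset is a distributive lattice.\<close>
definition dlat_obj :: "'a set \<Rightarrow> ('a \<Rightarrow> 'a \<Rightarrow> 'a) \<Rightarrow> bool" where
  "dlat_obj A j \<longleftrightarrow> finite A \<and> A \<noteq> {} \<and> semilattice_on A j \<and> distrib_lattice_on A j"

text \<open>Morphisms: join-preserving maps between carriers.\<close>
definition sl_hom :: "'a set \<Rightarrow> ('a \<Rightarrow> 'a \<Rightarrow> 'a) \<Rightarrow> 'b set \<Rightarrow> ('b \<Rightarrow> 'b \<Rightarrow> 'b) \<Rightarrow> ('a \<Rightarrow> 'b) \<Rightarrow> bool" where
  "sl_hom A jA B jB f \<longleftrightarrow> (\<forall>x\<in>A. f x \<in> B) \<and> (\<forall>x\<in>A. \<forall>y\<in>A. f (jA x y) = jB (f x) (f y))"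

end

theory Submission
  imports Defs
begin

text \<open>The idempotent f splits through its image f(A) with the inherited join, via the
  inclusion and the corestriction of f. The image is a distributive lattice because f
  carries meets of A to meets of f(A): if x and y are fixed by f, every z = f z below
  both lies below x \<sqinter> y, hence below f (x \<sqinter> y). Applying the join-preserving f to the
  distributive law of A then gives the distributive law of f(A).\<close>

lemma sl_is_meet_unique:
  assumes "semilattice_on A j" "sl_is_meet A j x y m" "sl_is_meet A j x y m'"
  shows "m = m'"
proof -
  have "sl_le j m m'" "sl_le j m' m" "m \<in> A" "m' \<in> A"
    using assms(2,3) unfolding sl_is_meet_def by auto
  then show ?thesis using assms(1) unfolding semilattice_on_def sl_le_def by metis
qed

lemma sl_hom_sl_le:
  assumes "sl_hom A jA B jB f" "x \<in> A" "y \<in> A" "sl_le jA x y"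
  shows "sl_le jB (f x) (f y)"
  using assms unfolding sl_hom_def sl_le_def by metis

lemma semilattice_on_subset:
  assumes "semilattice_on A j" "B \<subseteq> A" "\<forall>x\<in>B. \<forall>y\<in>B. j x y \<in> B"
  shows "semilattice_on B j"
  using assms unfolding semilattice_on_def by (meson subsetD)

lemma semilattice_on_hom_image:
  assumes "semilattice_on A jA" "semilattice_on B jB" "sl_hom A jA B jB f"
  shows "semilattice_on (f ` A) jB"
proof (rule semilattice_on_subset[OF assms(2)])
  show "f ` A \<subseteq> B" using assms(3) unfolding sl_hom_def by blast
  have "jB (f x) (f y) \<in> f ` A" if "x \<in> A" "y \<in> A" for x y
  proof -
    have "jA x y \<in> A" using assms(1) that unfolding semilattice_on_def by blast
    then show ?thesis using assms(3) that unfolding sl_hom_def by force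
  qed
  then show "\<forall>x\<in>f ` A. \<forall>y\<in>f ` A. jB x y \<in> f ` A" by blast
qed

context
  fixes A :: "'a set" and j :: "'a \<Rightarrow> 'a \<Rightarrow> 'a" and f :: "'a \<Rightarrow> 'a"
  assumes sl: "semilattice_on A j"
    and hom: "sl_hom A j A j f"
    and idem: "\<forall>x\<in>A. f (f x) = f x"
begin

lemma semilattice_on_idem_image: "semilattice_on (f ` A) j"
  using semilattice_on_hom_image[OF sl sl hom] .

lemma idem_image_subset: "f ` A \<subseteq> A"
  using hom unfolding sl_hom_def by blast

lemma idem_image_fixed: "x \<in> f ` A \<Longrightarrow> f x = x"
  using idem by auto

lemma sl_is_meet_idem_image:
  assumes xy: "x \<in> f ` A" "y \<in> f ` A" and M: "sl_is_meet A j x y M"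
  shows "sl_is_meet (f ` A) j x y (f M)"
proof -
  have MA: "M \<in> A" "sl_le j M x" "sl_le j M y" using M unfolding sl_is_meet_def by auto
  have xyA: "x \<in> A" "y \<in> A" using xy idem_image_subset by auto
  have "sl_le j (f M) x" "sl_le j (f M) y"
    using sl_hom_sl_le[OF hom] MA xyA idem_image_fixed[OF xy(1)] idem_image_fixed[OF xy(2)]
    by metis+
  moreover have "sl_le j z (f M)" if z: "z \<in> f ` A" "sl_le j z x" "sl_le j z y" for z
  proof -
    have "z \<in> A" using z(1) idem_image_subset by auto
    then have "sl_le j z M" using M z(2,3) unfolding sl_is_meet_def by blast
    then show ?thesis using sl_hom_sl_le[OF hom] \<open>z \<in> A\<close> MA idem_image_fixed[OF z(1)] by metis
  qed
  ultimately show ?thesis using MA(1) unfolding sl_is_meet_def by blast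
qed

lemma distrib_lattice_on_idem_image:
  assumes dl: "distrib_lattice_on A j"
  shows "distrib_lattice_on (f ` A) j"
proof -
  have meetA: "\<exists>M. sl_is_meet A j x y M" if "x \<in> f ` A" "y \<in> f ` A" for x y
    using dl that idem_image_subset unfolding distrib_lattice_on_def by blast
  have "m1 = j m2 m3"
    if xyz: "x \<in> f ` A" "y \<in> f ` A" "z \<in> f ` A"
      and m1: "sl_is_meet (f ` A) j x (j y z) m1"
      and m2: "sl_is_meet (f ` A) j x y m2"
      and m3: "sl_is_meet (f ` A) j x z m3" for x y z m1 m2 m3
  proof -
    have yz: "j y z \<in> f ` A"
      using semilattice_on_idem_image xyz(2,3) unfolding semilattice_on_def by blast
    obtain M1 M2 M3 where M1: "sl_is_meet A j x (j y z) M1"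
      and M2: "sl_is_meet A j x y M2" and M3: "sl_is_meet A j x z M3"
      using meetA xyz yz by metis
    have "m1 = f M1" "m2 = f M2" "m3 = f M3"
      using sl_is_meet_unique[OF semilattice_on_idem_image] m1 m2 m3
        sl_is_meet_idem_image[OF xyz(1) yz M1] sl_is_meet_idem_image[OF xyz(1,2) M2]
        sl_is_meet_idem_image[OF xyz(1,3) M3]
      by blast+
    moreover have "M1 = j M2 M3"
      using dl xyz idem_image_subset M1 M2 M3 unfolding distrib_lattice_on_def by blast
    moreover have "M2 \<in> A" "M3 \<in> A" using M2 M3 unfolding sl_is_meet_def by auto
    ultimately show ?thesis using hom unfolding sl_hom_def by auto
  qed
  then show ?thesis using meetA sl_is_meet_idem_image unfolding distrib_lattice_on_def by meson
qed

end

lemma dlat_obj_idem_image: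
  assumes "dlat_obj A j" "sl_hom A j A j f" "\<forall>x\<in>A. f (f x) = f x"
  shows "dlat_obj (f ` A) j"
  using assms semilattice_on_idem_image distrib_lattice_on_idem_image
  unfolding dlat_obj_def by blast

theorem mainTheorem6:
  fixes A :: "'a set" and jA :: "'a \<Rightarrow> 'a \<Rightarrow> 'a" and f :: "'a \<Rightarrow> 'a"
  assumes "dlat_obj A jA"
    and "sl_hom A jA A jA f"
    and "\<forall>x\<in>A. f (f x) = f x"
  shows "\<exists>(B :: 'a set) (jB :: 'a \<Rightarrow> 'a \<Rightarrow> 'a) s r.
           dlat_obj B jB \<and> sl_hom B jB A jA s \<and> sl_hom A jA B jB r \<and>
           (\<forall>x\<in>B. r (s x) = x) \<and> (\<forall>x\<in>A. s (r x) = f x)"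
proof -
  have "dlat_obj (f ` A) jA" using dlat_obj_idem_image[OF assms] .
  moreover have "sl_hom (f ` A) jA A jA id" and "sl_hom A jA (f ` A) jA f"
    using assms(2) unfolding sl_hom_def by auto
  moreover have "\<forall>x\<in>f ` A. f (id x) = x" and "\<forall>x\<in>A. id (f x) = f x"
    using assms(3) by auto
  ultimately show ?thesis by blast
qed

end
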